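(* In the two-door cascading memoryless semi-fractional setting, there is an optimal semi-fractional sequence $\pi^\star$ (i.e. $\mathbb{E}[\pi^\star]\le\mathbb{E}[\pi]$ for every semi-fractional sequence $\pi$) of the form $1^s(2\,1^t)^\infty$ for some positive reals $s,t$, and its expected running time is $$\mathbb{E}[\pi^\star]=\min_{z\in[0,1]}\left(\log_{q_1}(1-z)+\frac{c+(1-p_2z)\log_{q_1}(1-p_2z)}{p_2z}\right).$$
   Context: Two cascading memoryless doors with durations: parameters $p_1,p_2\in(0,1)$, $q_1=1-p_1$, $q_2=1-p_2$, and $c>0$. Both doors start closed. A semi-fractional sequence is an infinite alternating sequence of knocks $1^{t_1}\,2\,1^{t_2}\,2\cdots$ with real $t_j\ge0$. A 1-knock $1^t$ takes $t$ time units and, if door 1 is closed, opens it with probability $1-q_1^t$, independently of everything else. A 2-knock takes $c$ time units and opens door 2 with probability $p_2$ (independently) if door 1 is open at that time, and with probability $0$ otherwise. There is no feedback. The running time is the time at which both doors are open, and $\mathbb{E}[\pi]$ is its expectation for sequence $\pi$. $(2\,1^t)^\infty$ denotes infinite repetition. *)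

theory Defs
  imports "HOL-Probability.Probability"
begin

text \<open>A semi-fractional sequence 1^(t 0) 2 1^(t 1) 2 1^(t 2) 2 ... is given by
  t :: nat \<Rightarrow> real with all t i \<ge> 0.  Knock j (0-based) of kind 1 is the
  1-knock 1^(t j); knock j of kind 2 is the 2-knock immediately after it.

  Outcome space: for every index i a pair (a_i, b_i) of independent coins:
  a_i says whether the i-th 1-knock would open door 1 if it is closed
  (probability 1 - q1 powr (t i)), b_i says whether the i-th 2-knock would
  open door 2 if door 1 is open (probability p2).\<close>

definition knock_space :: "real \<Rightarrow> real \<Rightarrow> (nat \<Rightarrow> real) \<Rightarrow> (nat \<Rightarrow> bool \<times> bool) measure" where
  "knock_space p1 p2 t =
     (\<Pi>\<^sub>M i\<in>UNIV. measure_pmf (pair_pmf (bernoulli_pmf (1 - (1 - p1) powr t i)) (bernoulli_pmf p2)))"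

definition door1_open_at :: "(nat \<Rightarrow> bool \<times> bool) \<Rightarrow> nat \<Rightarrow> bool" where
  "door1_open_at \<omega> j = (\<exists>i\<le>j. fst (\<omega> i))"

definition door2_opens_at :: "(nat \<Rightarrow> bool \<times> bool) \<Rightarrow> nat \<Rightarrow> bool" where
  "door2_opens_at \<omega> j = (door1_open_at \<omega> j \<and> snd (\<omega> j))"

definition running_time :: "real \<Rightarrow> (nat \<Rightarrow> real) \<Rightarrow> (nat \<Rightarrow> bool \<times> bool) \<Rightarrow> ennreal" where
  "running_time c t \<omega> =
     (if \<exists>j. door2_opens_at \<omega> j
      then ennreal (\<Sum>i\<le>(LEAST j. door2_opens_at \<omega> j). t i + c)
      else \<infinity>)"

definition expected_time :: "real \<Rightarrow> real \<Rightarrow> real \<Rightarrow> (nat \<Rightarrow> real) \<Rightarrow> ennreal" where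
  "expected_time p1 p2 c t = (\<integral>\<^sup>+ \<omega>. running_time c t \<omega> \<partial>knock_space p1 p2 t)"

definition semi_fractional :: "(nat \<Rightarrow> real) \<Rightarrow> bool" where
  "semi_fractional t = (\<forall>i. 0 \<le> t i)"

definition periodic_seq :: "real \<Rightarrow> real \<Rightarrow> nat \<Rightarrow> real" where
  "periodic_seq s t = (\<lambda>i. if i = 0 then s else t)"

end

theory Submission
  imports Defs
begin

text \<open>Write \<open>q = 1 - p1\<close>, let \<open>X j = q powr (t 0 + \<dots> + t (j - 1))\<close> be the probability that door 1 is
  still closed before the \<open>j\<close>-th 2-knock and \<open>P j\<close> the probability that door 2 is.  Then
  \<open>E[\<pi>] = (\<Sum>j. (t j + c) * P j)\<close> and \<open>P (j + 1) = (1 - p2) * P j + p2 * X (j + 1)\<close>.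

  Let \<open>m\<close> be the minimum over \<open>z \<in> (0, 1)\<close> of the function \<open>f\<close> of the theorem.  Multiplied by \<open>p2 z\<close>,
  \<open>m \<le> f z\<close> says exactly that the potential \<open>m (1 - P N) + P N log q (X N / P N)\<close> grows by at most
  the cost \<open>(t N + c) P N\<close> of round \<open>N\<close> (take \<open>z = 1 - X (N + 1) / P N\<close>).  The potential is at
  least \<open>m (1 - P N)\<close>, and \<open>P N \<rightarrow> 0\<close> when \<open>E[\<pi>]\<close> is finite, so \<open>E[\<pi>] \<ge> m\<close>.  Conversely, for a
  minimiser \<open>z0\<close>, the sequence with \<open>s = log q (1 - z0)\<close> and \<open>t = log q (1 - p2 z0)\<close> has
  \<open>P j = (1 - p2 z0) ^ j\<close>, and its expected running time is the geometric sum \<open>f z0\<close>.\<close>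

section \<open>Survival probabilities\<close>

definition closed_prob :: "real \<Rightarrow> (nat \<Rightarrow> real) \<Rightarrow> nat \<Rightarrow> real" where
  "closed_prob q t j = (\<Prod>i<j. q powr t i)"

fun survival_prob :: "real \<Rightarrow> real \<Rightarrow> (nat \<Rightarrow> real) \<Rightarrow> nat \<Rightarrow> real" where
  "survival_prob q p t 0 = 1"
| "survival_prob q p t (Suc j) = (1 - p) * survival_prob q p t j + p * closed_prob q t (Suc j)"

lemma mult_less_one_of_le_one:
  fixes p z :: real
  assumes "0 \<le> p" "p \<le> 1" "0 \<le> z" "z < 1"
  shows "p * z < 1"
  using assms mult_left_le_one_le[of z p] by linarith

lemma closed_prob_Suc: "closed_prob q t (Suc j) = closed_prob q t j * q powr t j"
  by (simp add: closed_prob_def)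

lemma closed_prob_pos: "0 < q \<Longrightarrow> 0 < closed_prob q t j"
  by (simp add: closed_prob_def prod_pos)

lemma survival_step_bounds:
  fixes q p \<tau> X P :: real
  assumes q: "0 < q" "q \<le> 1" and p: "0 \<le> p" "p \<le> 1" and \<tau>: "0 \<le> \<tau>"
    and X: "0 < X" "X \<le> P"
  defines "X' \<equiv> X * q powr \<tau>" and "P' \<equiv> (1 - p) * P + p * (X * q powr \<tau>)"
  shows "X' \<le> P'" "0 < P'"
proof -
  have "q powr \<tau> \<le> 1"
    using q \<tau> by (intro powr_le1) auto
  then have "X' \<le> X"
    using X unfolding X'_def by (simp add: mult_left_le)
  then have "X' \<le> P"
    using X by simp
  moreover have "P' - X' = (1 - p) * (P - X')"
    unfolding P'_def X'_def by (simp add: algebra_simps)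
  ultimately have "X' \<le> P'"
    using p by (metis diff_ge_0_iff_ge mult_nonneg_nonneg)
  moreover have "0 < X'"
    using X q unfolding X'_def by simp
  ultimately show "X' \<le> P'" "0 < P'"
    by auto
qed

lemma survival_prob_bounds:
  assumes q: "0 < q" "q \<le> 1" and p: "0 \<le> p" "p \<le> 1" and t: "\<And>i. 0 \<le> t i"
  shows "closed_prob q t N \<le> survival_prob q p t N \<and> 0 < survival_prob q p t N"
proof (induction N)
  case (Suc N)
  then show ?case
    using survival_step_bounds[OF q p t closed_prob_pos[OF q(1)]]
    by (simp add: closed_prob_Suc)
qed (simp add: closed_prob_def)

definition knock_coins :: "real \<Rightarrow> real \<Rightarrow> (nat \<Rightarrow> real) \<Rightarrow> nat \<Rightarrow> (bool \<times> bool) measure" where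
  "knock_coins p1 p2 t i =
     measure_pmf (pair_pmf (bernoulli_pmf (1 - (1 - p1) powr t i)) (bernoulli_pmf p2))"

definition no_opening_before :: "nat \<Rightarrow> (nat \<Rightarrow> bool \<times> bool) set" where
  "no_opening_before j = {\<omega>. \<forall>i<j. \<not> door2_opens_at \<omega> i}"

text \<open>Door 2 stays closed during the first \<open>j\<close> rounds iff, for the round \<open>k \<le> j\<close> in which
  door 1 opens (\<open>k = j\<close>: not before round \<open>j\<close>), the coins of each round \<open>i < j\<close> lie in
  \<open>survival_pattern k i\<close>.\<close>
definition survival_pattern :: "nat \<Rightarrow> nat \<Rightarrow> (bool \<times> bool) set" where
  "survival_pattern k i =
     (if i < k then {ab. \<not> fst ab} else if i = k then {ab. fst ab \<and> \<not> snd ab} else {ab. \<not> snd ab})"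

definition pattern_prob :: "real \<Rightarrow> real \<Rightarrow> (nat \<Rightarrow> real) \<Rightarrow> nat \<Rightarrow> nat \<Rightarrow> real" where
  "pattern_prob q p t k i =
     (if i < k then q powr t i else if i = k then (1 - q powr t i) * (1 - p) else 1 - p)"

definition survival_cylinder ::
    "real \<Rightarrow> real \<Rightarrow> (nat \<Rightarrow> real) \<Rightarrow> nat \<Rightarrow> nat \<Rightarrow> (nat \<Rightarrow> bool \<times> bool) set" where
  "survival_cylinder p1 p2 t j k =
     prod_emb UNIV (knock_coins p1 p2 t) {..<j} (PiE {..<j} (survival_pattern k))"

lemma knock_space_eq_PiM: "knock_space p1 p2 t = PiM UNIV (knock_coins p1 p2 t)"
  unfolding knock_space_def knock_coins_def by simp

lemma mem_survival_cylinder: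
  "\<omega> \<in> survival_cylinder p1 p2 t j k \<longleftrightarrow> (\<forall>i<j. \<omega> i \<in> survival_pattern k i)"
  unfolding survival_cylinder_def
  by (simp add: prod_emb_iff restrict_PiE_iff knock_coins_def Pi_iff) blast

lemma survival_cylinder_sets: "survival_cylinder p1 p2 t j k \<in> sets (knock_space p1 p2 t)"
  unfolding survival_cylinder_def knock_space_eq_PiM
  by (intro sets_PiM_I) (auto simp: knock_coins_def)

lemma disjoint_family_survival_cylinder:
  "disjoint_family_on (survival_cylinder p1 p2 t j) {..j}"
proof (unfold disjoint_family_on_def, intro ballI impI equals0I)
  fix k k' \<omega> assume k: "k \<in> {..j}" "k' \<in> {..j}" "k \<noteq> k'"
    and "\<omega> \<in> survival_cylinder p1 p2 t j k \<inter> survival_cylinder p1 p2 t j k'"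
  moreover have "min k k' < j"
    using k by auto
  ultimately have "\<omega> (min k k') \<in> survival_pattern k (min k k') \<inter> survival_pattern k' (min k k')"
    by (auto simp: mem_survival_cylinder)
  then show False
    using k(3) by (auto simp: survival_pattern_def min_def split: if_splits)
qed

lemma no_opening_before_eq_Union:
  "no_opening_before j = (\<Union>k\<le>j. survival_cylinder p1 p2 t j k)"
proof (intro equalityI subsetI)
  fix \<omega> assume \<omega>: "\<omega> \<in> no_opening_before j"
  obtain k where k: "k \<le> j" "\<And>i. i < k \<Longrightarrow> \<not> fst (\<omega> i)" "k < j \<Longrightarrow> fst (\<omega> k)"
  proof (cases "\<exists>k. k < j \<and> fst (\<omega> k)")
    case True
    then obtain k where "k < j \<and> fst (\<omega> k)" "\<forall>m<k. \<not> (m < j \<and> fst (\<omega> m))"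
      unfolding exists_least_iff[of "\<lambda>k. k < j \<and> fst (\<omega> k)"] by blast
    then show ?thesis
      using that[of k] by auto
  qed auto
  have "\<omega> i \<in> survival_pattern k i" if "i < j" for i
  proof (cases "k \<le> i")
    case True
    then have "door1_open_at \<omega> i"
      using k(3) that unfolding door1_open_at_def by (auto intro: exI[of _ k])
    then show ?thesis
      using \<omega> that True k(3) by (auto simp: no_opening_before_def door2_opens_at_def survival_pattern_def)
  qed (use k(2) in \<open>simp add: survival_pattern_def\<close>)
  then show "\<omega> \<in> (\<Union>k\<le>j. survival_cylinder p1 p2 t j k)"
    using k(1) by (auto simp: mem_survival_cylinder)
next
  fix \<omega> assume "\<omega> \<in> (\<Union>k\<le>j. survival_cylinder p1 p2 t j k)"
  then obtain k where pattern: "\<And>i. i < j \<Longrightarrow> \<omega> i \<in> survival_pattern k i"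
    by (auto simp: mem_survival_cylinder)
  have "\<not> door2_opens_at \<omega> i" if "i < j" for i
  proof (cases "i < k")
    case True
    have "\<not> fst (\<omega> i')" if "i' \<le> i" for i'
      using pattern[of i'] that True \<open>i < j\<close> by (simp add: survival_pattern_def)
    then have "\<not> door1_open_at \<omega> i"
      by (auto simp: door1_open_at_def)
    then show ?thesis
      by (simp add: door2_opens_at_def)
  next
    case False
    then show ?thesis
      using pattern[OF that] by (auto simp: door2_opens_at_def survival_pattern_def split: if_splits)
  qed
  then show "\<omega> \<in> no_opening_before j"
    by (simp add: no_opening_before_def)
qed

lemma no_opening_before_sets: "no_opening_before j \<in> sets (knock_space p1 p2 t)"
  using survival_cylinder_sets by (auto simp: no_opening_before_eq_Union[of j p1 p2 t])

lemma emeasure_survival_pattern: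
  assumes p1: "0 \<le> p1" "p1 < 1" and p2: "0 \<le> p2" "p2 \<le> 1" and t: "0 \<le> t i"
  shows "emeasure (knock_coins p1 p2 t i) (survival_pattern k i) = pattern_prob (1 - p1) p2 t k i"
proof -
  have r: "0 \<le> (1 - p1) powr t i" "(1 - p1) powr t i \<le> 1"
    using p1 t by (auto intro: powr_le1)
  have sets: "{ab::bool \<times> bool. \<not> fst ab} = {(False, False), (False, True)}"
    "{ab::bool \<times> bool. fst ab \<and> \<not> snd ab} = {(True, False)}"
    "{ab::bool \<times> bool. \<not> snd ab} = {(False, False), (True, False)}"
    by auto
  have "(\<Sum>ab\<in>survival_pattern k i.
      pmf (pair_pmf (bernoulli_pmf (1 - (1 - p1) powr t i)) (bernoulli_pmf p2)) ab)
    = pattern_prob (1 - p1) p2 t k i"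
  proof (cases "i = k")
    case True
    show ?thesis
      unfolding True[symmetric] using r p2
      by (simp add: pattern_prob_def survival_pattern_def pmf_pair sets)
  qed (use r p2 in \<open>simp add: pattern_prob_def survival_pattern_def pmf_pair sets algebra_simps\<close>)
  then show ?thesis
    unfolding knock_coins_def by (simp add: emeasure_measure_pmf_finite)
qed

lemma pattern_prob_nonneg:
  assumes "0 < q" "q \<le> 1" "p \<le> 1" "0 \<le> t i"
  shows "0 \<le> pattern_prob q p t k i"
proof -
  have "q powr t i \<le> 1"
    using assms by (intro powr_le1) auto
  then show ?thesis
    using assms unfolding pattern_prob_def by auto
qed

lemma prod_pattern_prob_diag: "(\<Prod>i<j. pattern_prob q p t j i) = closed_prob q t j"
  unfolding closed_prob_def pattern_prob_def by (intro prod.cong) auto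

lemma sum_prod_pattern_prob: "(\<Sum>k\<le>j. \<Prod>i<j. pattern_prob q p t k i) = survival_prob q p t j"
proof (induction j)
  case (Suc j)
  let ?\<Pi> = "\<lambda>k. \<Prod>i<j. pattern_prob q p t k i"
  have IH: "(\<Sum>k<j. ?\<Pi> k) = survival_prob q p t j - closed_prob q t j"
    using Suc.IH by (simp add: lessThan_Suc_atMost[symmetric] prod_pattern_prob_diag)
  have "(\<Sum>k\<le>Suc j. \<Prod>i<Suc j. pattern_prob q p t k i)
      = (\<Sum>k\<le>j. \<Prod>i<Suc j. pattern_prob q p t k i) + closed_prob q t (Suc j)"
    by (simp add: prod_pattern_prob_diag del: prod.lessThan_Suc)
  also have "(\<Sum>k\<le>j. \<Prod>i<Suc j. pattern_prob q p t k i)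
      = (\<Sum>k<j. ?\<Pi> k * pattern_prob q p t k j) + ?\<Pi> j * pattern_prob q p t j j"
    by (simp add: lessThan_Suc_atMost[symmetric])
  also have "(\<Sum>k<j. ?\<Pi> k * pattern_prob q p t k j) = (1 - p) * (\<Sum>k<j. ?\<Pi> k)"
    by (simp add: pattern_prob_def sum_distrib_left mult.commute)
  also have "?\<Pi> j * pattern_prob q p t j j = (1 - q powr t j) * (1 - p) * closed_prob q t j"
    by (simp only: prod_pattern_prob_diag) (simp add: pattern_prob_def)
  finally show ?case
    by (simp add: IH closed_prob_Suc algebra_simps)
qed simp

lemma emeasure_no_opening_before:
  assumes p1: "0 \<le> p1" "p1 < 1" and p2: "0 \<le> p2" "p2 \<le> 1" and t: "\<And>i. 0 \<le> t i"
  shows "emeasure (knock_space p1 p2 t) (no_opening_before j) = survival_prob (1 - p1) p2 t j"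
proof -
  have nonneg: "0 \<le> pattern_prob (1 - p1) p2 t k i" for k i
    using p1 p2 t by (intro pattern_prob_nonneg) auto
  have "emeasure (knock_space p1 p2 t) (survival_cylinder p1 p2 t j k)
      = (\<Prod>i<j. emeasure (knock_coins p1 p2 t i) (survival_pattern k i))" for k
    unfolding knock_space_eq_PiM survival_cylinder_def
    by (rule emeasure_PiM_emb) (auto simp: knock_coins_def measure_pmf.prob_space_axioms)
  also have "\<dots> k = ennreal (\<Prod>i<j. pattern_prob (1 - p1) p2 t k i)" for k
    using emeasure_survival_pattern[OF p1 p2 t] nonneg by (simp add: prod_ennreal)
  finally have "emeasure (knock_space p1 p2 t) (no_opening_before j)
      = (\<Sum>k\<le>j. ennreal (\<Prod>i<j. pattern_prob (1 - p1) p2 t k i))"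
    unfolding no_opening_before_eq_Union[of j p1 p2 t]
    using survival_cylinder_sets disjoint_family_survival_cylinder
    by (subst sum_emeasure[symmetric]) auto
  also have "\<dots> = survival_prob (1 - p1) p2 t j"
    using nonneg by (simp add: prod_nonneg sum_prod_pattern_prob)
  finally show ?thesis .
qed

lemma running_time_eq_suminf:
  assumes c: "0 < c" and t: "\<And>i. 0 \<le> t i"
  shows "running_time c t \<omega> = (\<Sum>j. ennreal (t j + c) * indicator (no_opening_before j) \<omega>)"
proof (cases "\<exists>j. door2_opens_at \<omega> j")
  case True
  define J where "J = (LEAST j. door2_opens_at \<omega> j)"
  have J: "door2_opens_at \<omega> J" "\<And>i. i < J \<Longrightarrow> \<not> door2_opens_at \<omega> i"
    unfolding J_def using LeastI_ex[OF True] not_less_Least by auto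
  have "\<omega> \<in> no_opening_before j \<longleftrightarrow> j \<le> J" for j
  proof
    show "\<omega> \<in> no_opening_before j \<Longrightarrow> j \<le> J"
      using J(1) by (force simp: no_opening_before_def not_le[symmetric])
    show "j \<le> J \<Longrightarrow> \<omega> \<in> no_opening_before j"
      using J(2) by (simp add: no_opening_before_def)
  qed
  then have "(\<Sum>j. ennreal (t j + c) * indicator (no_opening_before j) \<omega>) = (\<Sum>j\<le>J. ennreal (t j + c))"
    by (subst suminf_finite[of "{..J}"]) (auto intro: sum.cong)
  also have "\<dots> = ennreal (\<Sum>j\<le>J. t j + c)"
    using t c by (intro sum_ennreal) (auto intro: add_nonneg_nonneg)
  finally show ?thesis
    using True unfolding running_time_def J_def by simp
next
  case False
  have "\<not> summable (\<lambda>j. t j + c)"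
  proof
    assume "summable (\<lambda>j. t j + c)"
    then have "(\<lambda>j. t j + c) \<longlonglongrightarrow> 0"
      by (rule summable_LIMSEQ_zero)
    then have "\<forall>\<^sub>F j in sequentially. t j + c < c"
      using c by (rule order_tendstoD)
    then obtain j where "t j + c < c"
      using eventually_happens' sequentially_bot by blast
    then show False
      using t[of j] by simp
  qed
  then have "(\<Sum>j. ennreal (t j + c)) = \<infinity>"
    using t c summable_suminf_not_top[of "\<lambda>j. t j + c"] by (auto intro: add_nonneg_nonneg less_imp_le)
  then show ?thesis
    using False unfolding running_time_def by (simp add: no_opening_before_def)
qed

lemma expected_time_eq_suminf:
  assumes p1: "0 \<le> p1" "p1 < 1" and p2: "0 \<le> p2" "p2 \<le> 1" and c: "0 < c" and t: "\<And>i. 0 \<le> t i"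
  shows "expected_time p1 p2 c t = (\<Sum>j. ennreal ((t j + c) * survival_prob (1 - p1) p2 t j))"
proof -
  have "expected_time p1 p2 c t
      = (\<integral>\<^sup>+ \<omega>. (\<Sum>j. ennreal (t j + c) * indicator (no_opening_before j) \<omega>) \<partial>knock_space p1 p2 t)"
    unfolding expected_time_def by (intro nn_integral_cong) (rule running_time_eq_suminf[where t = t, OF c t])
  also have "\<dots> = (\<Sum>j. \<integral>\<^sup>+ \<omega>. ennreal (t j + c) * indicator (no_opening_before j) \<omega> \<partial>knock_space p1 p2 t)"
    by (rule nn_integral_suminf) (use no_opening_before_sets in measurable)
  also have "\<dots> = (\<Sum>j. ennreal (t j + c) * emeasure (knock_space p1 p2 t) (no_opening_before j))"
    by (simp add: nn_integral_cmult_indicator no_opening_before_sets)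
  also have "\<dots> = (\<Sum>j. ennreal ((t j + c) * survival_prob (1 - p1) p2 t j))"
    using c t by (intro suminf_cong)
      (simp add: emeasure_no_opening_before[OF p1 p2 t] ennreal_mult' add_nonneg_nonneg less_imp_le
        del: ennreal_plus)
  finally show ?thesis .
qed

section \<open>A lower bound by a potential function\<close>

definition objective :: "real \<Rightarrow> real \<Rightarrow> real \<Rightarrow> real \<Rightarrow> real" where
  "objective q p c z = log q (1 - z) + (c + (1 - p * z) * log q (1 - p * z)) / (p * z)"

lemma log_nonneg_of_base_lt_one:
  assumes "0 < q" "q < 1" "0 < x" "x \<le> 1"
  shows "0 \<le> log q x"
proof -
  have "ln x \<le> 0" "ln q < 0"
    using assms by simp_all
  then show ?thesis
    unfolding log_def by (simp add: divide_nonpos_neg)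
qed

lemma log_gt_of_base_lt_one:
  assumes "0 < q" "q < 1" "0 < x" "x < q powr y"
  shows "y < log q x"
proof -
  have "ln x < ln (q powr y)"
    by (rule ln_less_cancel_iff[THEN iffD2]) (use assms in auto)
  also have "\<dots> = y * ln q"
    using assms by (simp add: ln_powr)
  finally have "ln x < y * ln q" .
  moreover have "ln q < 0"
    using assms by simp
  ultimately show ?thesis
    unfolding log_def by (simp add: neg_less_divide_eq)
qed

lemma mult_objective_eq:
  assumes "0 < p" "0 < z"
  shows "p * z * objective q p c z = c + p * z * log q (1 - z) + (1 - p * z) * log q (1 - p * z)"
  using assms by (simp add: objective_def field_simps)

lemma objective_bound_cleared:
  assumes p: "0 < p" and c: "0 \<le> c" and m: "\<forall>z\<in>{0<..<1}. m \<le> objective q p c z"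
    and z: "0 \<le> z" "z < 1"
  shows "m * p * z \<le> c + p * z * log q (1 - z) + (1 - p * z) * log q (1 - p * z)"
proof (cases "z = 0")
  case False
  have "m * p * z = p * z * m"
    by (simp add: mult_ac)
  also have "\<dots> \<le> p * z * objective q p c z"
    using m p z False by (intro mult_left_mono) auto
  finally show ?thesis
    using False p z by (simp add: mult_objective_eq)
qed (use c in simp)

text \<open>\<open>X\<close> and \<open>P\<close> are the probabilities that door 1, resp. door 2, is still closed before a round
  whose 1-knock lasts \<open>\<tau>\<close>, and \<open>X'\<close>, \<open>P'\<close> after it.  Then \<open>z\<close> is the conditional probability that
  door 1 is open after the 1-knock, given that door 2 was closed before the round.\<close>
lemma round_parametrisation:
  fixes q p \<tau> X P :: real
  assumes q: "0 < q" "q < 1" and p: "0 \<le> p" "p \<le> 1" and \<tau>: "0 \<le> \<tau>" and X: "0 < X" "X \<le> P"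
  defines "X' \<equiv> X * q powr \<tau>" and "P' \<equiv> (1 - p) * P + p * (X * q powr \<tau>)"
    and "z \<equiv> 1 - X * q powr \<tau> / P"
  shows "0 \<le> z" "z < 1" "P' = P * (1 - p * z)"
    "log q (1 - z) = log q (X / P) + \<tau>"
    "log q (X' / P') = log q (1 - z) - log q (1 - p * z)"
proof -
  have qt: "0 < q powr \<tau>" "q powr \<tau> \<le> 1"
    using q \<tau> by (auto intro: powr_le1)
  have P: "0 < P"
    using X by simp
  have "X * q powr \<tau> \<le> X"
    using X qt by (simp add: mult_left_le)
  then have "X * q powr \<tau> \<le> P"
    using X by linarith
  then have "X * q powr \<tau> / P \<le> 1"
    using P by simp
  moreover have "0 < X * q powr \<tau> / P"
    using X P qt by simp
  ultimately show z: "0 \<le> z" "z < 1"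
    unfolding z_def by linarith+
  have pz: "0 < 1 - p * z"
    using mult_less_one_of_le_one[OF p z] by simp
  show P': "P' = P * (1 - p * z)"
    using P unfolding P'_def z_def by (simp add: field_simps)
  have "1 - z = (X / P) * q powr \<tau>"
    using P unfolding z_def by simp
  moreover have "log q ((X / P) * q powr \<tau>) = log q (X / P) + \<tau>"
    using X P q by (subst log_mult_pos) auto
  ultimately show "log q (1 - z) = log q (X / P) + \<tau>"
    by simp
  have "X' / P' = (1 - z) / (1 - p * z)"
    using P unfolding P' z_def X'_def by simp
  then show "log q (X' / P') = log q (1 - z) - log q (1 - p * z)"
    using z pz by (simp add: log_divide_pos)
qed

lemma potential_step:
  fixes q p c m \<tau> X P :: real
  assumes q: "0 < q" "q < 1" and p: "0 < p" "p \<le> 1" and c: "0 \<le> c" and \<tau>: "0 \<le> \<tau>"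
    and X: "0 < X" "X \<le> P" and m: "\<forall>z\<in>{0<..<1}. m \<le> objective q p c z"
  defines "X' \<equiv> X * q powr \<tau>" and "P' \<equiv> (1 - p) * P + p * (X * q powr \<tau>)"
  shows "m * (1 - P') + P' * log q (X' / P') \<le> m * (1 - P) + P * log q (X / P) + (\<tau> + c) * P"
proof -
  define z where "z = 1 - X * q powr \<tau> / P"
  note round = round_parametrisation[OF q less_imp_le[OF p(1)] p(2) \<tau> X,
      folded X'_def P'_def z_def]
  define L where "L = log q (X / P)"
  define A where "A = log q (1 - p * z)"
  have "m * p * z \<le> c + p * z * (L + \<tau>) + (1 - p * z) * A"
    using objective_bound_cleared[OF p(1) c m round(1,2)] by (simp only: round(4) L_def A_def)
  then have "P * (m * p * z) \<le> P * (c + p * z * (L + \<tau>) + (1 - p * z) * A)"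
    using X by (simp add: mult_left_mono)
  moreover have "m * (1 - P) + P * L + (\<tau> + c) * P - (m * (1 - P') + P' * (L + \<tau> - A))
    = P * (c + p * z * (L + \<tau>) + (1 - p * z) * A) - P * (m * p * z)"
    unfolding round(3) by (simp add: algebra_simps)
  ultimately have "m * (1 - P') + P' * (L + \<tau> - A) \<le> m * (1 - P) + P * L + (\<tau> + c) * P"
    by linarith
  then show ?thesis
    by (simp only: round(4,5) L_def A_def)
qed

lemma potential_le_partial_cost:
  assumes q: "0 < q" "q < 1" and p: "0 < p" "p \<le> 1" and c: "0 \<le> c" and t: "\<And>i. 0 \<le> t i"
    and m: "\<forall>z\<in>{0<..<1}. m \<le> objective q p c z"
  shows "m * (1 - survival_prob q p t N)
      + survival_prob q p t N * log q (closed_prob q t N / survival_prob q p t N)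
    \<le> (\<Sum>j<N. (t j + c) * survival_prob q p t j)"
proof (induction N)
  case (Suc N)
  let ?X = "closed_prob q t N" and ?P = "survival_prob q p t N"
  have "?X \<le> ?P"
    using survival_prob_bounds[OF q(1) _ _ p(2) t] q p by auto
  then have "m * (1 - survival_prob q p t (Suc N))
      + survival_prob q p t (Suc N) * log q (closed_prob q t (Suc N) / survival_prob q p t (Suc N))
    \<le> m * (1 - ?P) + ?P * log q (?X / ?P) + (t N + c) * ?P"
    using potential_step[OF q p c t closed_prob_pos[OF q(1)] _ m] by (simp add: closed_prob_Suc)
  with Suc.IH show ?case
    by simp
qed (simp add: closed_prob_def)

lemma expected_cost_lower_bound:
  assumes q: "0 < q" "q < 1" and p: "0 < p" "p \<le> 1" and c: "0 < c" and t: "\<And>i. 0 \<le> t i"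
    and m: "\<forall>z\<in>{0<..<1}. m \<le> objective q p c z"
  shows "ennreal m \<le> (\<Sum>j. ennreal ((t j + c) * survival_prob q p t j))"
proof (cases "(\<Sum>j. ennreal ((t j + c) * survival_prob q p t j)) = \<infinity>")
  case False
  define P where "P = survival_prob q p t"
  define f where "f j = (t j + c) * P j" for j
  have P: "closed_prob q t N \<le> P N" "0 < P N" for N
    using survival_prob_bounds[OF q(1) _ _ p(2) t] q p unfolding P_def by auto
  have f: "0 \<le> f j" for j
    using t[of j] c P(2)[of j] unfolding f_def by simp
  have "summable f"
    using False f unfolding f_def P_def by (intro summable_suminf_not_top) auto
  have "P \<longlonglongrightarrow> 0"
  proof (rule tendsto_sandwich[of "\<lambda>_. 0" P sequentially "\<lambda>j. f j / c"])
    have "P j \<le> f j / c" for j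
      using c t[of j] P(2)[of j] unfolding f_def by (simp add: field_simps)
    then show "\<forall>\<^sub>F j in sequentially. P j \<le> f j / c"
      by simp
    show "\<forall>\<^sub>F j in sequentially. 0 \<le> P j"
      using P(2) by (simp add: less_imp_le)
    show "(\<lambda>j. f j / c) \<longlonglongrightarrow> 0"
      using tendsto_divide[OF summable_LIMSEQ_zero[OF \<open>summable f\<close>] tendsto_const, of c] c
      by simp
  qed simp
  then have "(\<lambda>N. m * (1 - P N)) \<longlonglongrightarrow> m * (1 - 0)"
    by (intro tendsto_intros)
  then have lim: "(\<lambda>N. m * (1 - P N)) \<longlonglongrightarrow> m"
    by simp
  have "m * (1 - P N) \<le> suminf f" for N
  proof -
    have "0 \<le> log q (closed_prob q t N / P N)"
      using P[of N] closed_prob_pos[OF q(1)] q by (intro log_nonneg_of_base_lt_one) auto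
    then have "0 \<le> P N * log q (closed_prob q t N / P N)"
      using P(2)[of N] by simp
    then have "m * (1 - P N) \<le> (\<Sum>j<N. f j)"
      using potential_le_partial_cost[where t=t and N=N, OF q p less_imp_le[OF c] t m]
      unfolding f_def P_def by linarith
    also have "\<dots> \<le> suminf f"
      using \<open>summable f\<close> f by (intro sum_le_suminf) auto
    finally show ?thesis .
  qed
  then have "m \<le> suminf f"
    using LIMSEQ_le_const2[OF lim] by blast
  then show ?thesis
    using suminf_ennreal2[OF f \<open>summable f\<close>] unfolding f_def P_def by (simp add: ennreal_leI)
qed simp

section \<open>The optimal periodic sequence\<close>

lemma objective_ge:
  assumes q: "0 < q" "q < 1" and p: "0 < p" "p \<le> 1" and c: "0 \<le> c" and z: "0 < z" "z < 1"
  shows "log q (1 - z) \<le> objective q p c z" "c / (p * z) \<le> objective q p c z"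
proof -
  have pz: "0 < p * z" "p * z < 1"
    using p z mult_less_one_of_le_one[of p z] by auto
  have "0 \<le> log q (1 - z)"
    using q z by (intro log_nonneg_of_base_lt_one) auto
  moreover have "0 \<le> (1 - p * z) * log q (1 - p * z)"
    using q pz by (intro mult_nonneg_nonneg log_nonneg_of_base_lt_one) auto
  ultimately show "log q (1 - z) \<le> objective q p c z" "c / (p * z) \<le> objective q p c z"
    using c pz unfolding objective_def by (auto simp: add_divide_distrib)
qed

text \<open>By \<open>objective_ge\<close> the objective blows up at both ends of \<open>(0, 1)\<close>, so its infimum is
  attained on a compact subinterval.\<close>
lemma objective_attains_min:
  assumes q: "0 < q" "q < 1" and p: "0 < p" "p \<le> 1" and c: "0 < c"
  shows "\<exists>z0\<in>{0<..<1}. \<forall>z\<in>{0<..<1}. objective q p c z0 \<le> objective q p c z"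
proof -
  define A where "A = objective q p c (1/2)"
  have "0 \<le> log q (1 - 1/2)"
    using q by (intro log_nonneg_of_base_lt_one) auto
  then have A: "0 \<le> A"
    unfolding A_def using objective_ge(1)[OF q p less_imp_le[OF c], of "1/2"] by simp
  define a where "a = min (1/2) (c / (p * (A + 1)))"
  define b where "b = max (1/2) (1 - q powr (A + 1))"
  have a: "0 < a" "a \<le> 1/2"
    unfolding a_def using c p A by (simp, simp only: min.cobounded1)
  have b: "1/2 \<le> b" "b < 1"
    unfolding b_def using q by auto
  have cont: "continuous_on {a..b} (objective q p c)"
  proof -
    have "\<forall>z\<in>{a..b}. 0 < z \<and> z < 1"
      using a b by auto
    moreover have "\<forall>z\<in>{a..b}. p * z < 1"
      using a b p mult_less_one_of_le_one[of p] by auto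
    ultimately show ?thesis
      unfolding objective_def using q p by (intro continuous_intros) auto
  qed
  then obtain z0 where z0: "z0 \<in> {a..b}" and min: "\<forall>y\<in>{a..b}. objective q p c z0 \<le> objective q p c y"
    using continuous_attains_inf[OF compact_Icc _ cont] a b by auto
  have z0A: "objective q p c z0 \<le> A"
    unfolding A_def using min a b by auto
  have "objective q p c z0 \<le> objective q p c z" if z: "z \<in> {0<..<1}" for z
  proof -
    consider "z < a" | "z \<in> {a..b}" | "b < z"
      by force
    then show ?thesis
    proof cases
      case 1
      then have "p * z * (A + 1) < c"
        using p z A unfolding a_def by (simp add: less_divide_eq mult_ac)
      then have "A + 1 < c / (p * z)"
        using p z by (simp add: less_divide_eq mult_ac)
      then show ?thesis
        using objective_ge(2)[OF q p less_imp_le[OF c]] z z0A by fastforce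
    next
      case 2
      then show ?thesis
        using min by blast
    next
      case 3
      then have "1 - z < q powr (A + 1)"
        unfolding b_def by simp
      then have "A + 1 < log q (1 - z)"
        using z q by (intro log_gt_of_base_lt_one) auto
      then show ?thesis
        using objective_ge(1)[OF q p less_imp_le[OF c]] z z0A by fastforce
    qed
  qed
  moreover have "z0 \<in> {0<..<1}"
    using z0 a b by auto
  ultimately show ?thesis
    by blast
qed

lemma periodic_seq_cost_sums:
  assumes q: "0 < q" "q < 1" and p: "0 < p" "p \<le> 1" and z: "0 < z" "z < 1"
  defines "s \<equiv> log q (1 - z)" and "u \<equiv> log q (1 - p * z)"
  shows "(\<lambda>j. (periodic_seq s u j + c) * survival_prob q p (periodic_seq s u) j) sums objective q p c z"
proof -
  define \<rho> where "\<rho> = 1 - p * z"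
  have pz: "0 < p * z" "p * z < 1"
    using p z mult_less_one_of_le_one[of p z] by auto
  then have \<rho>: "0 < \<rho>" "\<rho> < 1"
    unfolding \<rho>_def by auto
  have closed: "closed_prob q (periodic_seq s u) (Suc j) = (1 - z) * \<rho> ^ j" for j
  proof (induction j)
    case 0
    then show ?case
      using q z by (simp add: closed_prob_def periodic_seq_def s_def)
  next
    case (Suc j)
    then show ?case
      using q pz by (simp add: closed_prob_Suc[of q _ "Suc j"] periodic_seq_def u_def \<rho>_def)
  qed
  have survival: "survival_prob q p (periodic_seq s u) j = \<rho> ^ j" for j
    by (induction j) (simp_all add: closed \<rho>_def algebra_simps)
  have "(\<lambda>j. (u + c) * \<rho> ^ j + (if j = 0 then s - u else 0)) sums ((u + c) * (1 / (1 - \<rho>)) + (s - u))"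
    using \<rho> by (intro sums_add sums_mult geometric_sums sums_single[of 0 "\<lambda>_. s - u", simplified]) auto
  moreover have "(u + c) * (1 / (1 - \<rho>)) + (s - u) = objective q p c z"
    unfolding objective_def s_def u_def \<rho>_def using p z by (simp add: field_simps)
  moreover have "(periodic_seq s u j + c) * survival_prob q p (periodic_seq s u) j
      = (u + c) * \<rho> ^ j + (if j = 0 then s - u else 0)" for j
    by (simp only: survival) (simp add: periodic_seq_def algebra_simps)
  ultimately show ?thesis
    by simp
qed

lemma expected_time_periodic_seq:
  assumes p1: "0 < p1" "p1 < 1" and p2: "0 < p2" "p2 \<le> 1" and c: "0 < c" and z: "0 < z" "z < 1"
  defines "q \<equiv> 1 - p1"
  shows "expected_time p1 p2 c (periodic_seq (log q (1 - z)) (log q (1 - p2 * z)))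
    = ennreal (objective q p2 c z)"
proof -
  let ?t = "periodic_seq (log q (1 - z)) (log q (1 - p2 * z))"
  have q: "0 < q" "q < 1"
    using p1 unfolding q_def by auto
  have "p2 * z < 1"
    using p2 z mult_less_one_of_le_one[of p2 z] by auto
  then have "0 \<le> log q (1 - z)" "0 \<le> log q (1 - p2 * z)"
    using q p2 z by (auto intro!: log_nonneg_of_base_lt_one)
  then have t: "0 \<le> ?t i" for i
    by (simp add: periodic_seq_def)
  have "0 \<le> (?t j + c) * survival_prob q p2 ?t j" for j
    using t[of j] c survival_prob_bounds[OF q(1) less_imp_le[OF q(2)] less_imp_le[OF p2(1)] p2(2) t]
    by (simp add: less_imp_le)
  then show ?thesis
    unfolding expected_time_eq_suminf[OF less_imp_le[OF p1(1)] p1(2) less_imp_le[OF p2(1)] p2(2) c t]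
      q_def[symmetric]
    by (rule suminf_ennreal_eq) (rule periodic_seq_cost_sums[OF q p2 z])
qed

theorem mainTheorem14:
  fixes p1 p2 c :: real
  assumes "0 < p1" "p1 < 1" "0 < p2" "p2 < 1" "0 < c"
  shows "\<exists>s t. 0 < s \<and> 0 < t \<and>
           (\<forall>\<pi>. semi_fractional \<pi> \<longrightarrow>
                 expected_time p1 p2 c (periodic_seq s t) \<le> expected_time p1 p2 c \<pi>) \<and>
           (\<exists>z0\<in>{0<..<1}.
              (\<forall>z\<in>{0<..<1}.
                 log (1 - p1) (1 - z0) + (c + (1 - p2 * z0) * log (1 - p1) (1 - p2 * z0)) / (p2 * z0)
                 \<le> log (1 - p1) (1 - z) + (c + (1 - p2 * z) * log (1 - p1) (1 - p2 * z)) / (p2 * z)) \<and>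
              expected_time p1 p2 c (periodic_seq s t) =
                ennreal (log (1 - p1) (1 - z0) + (c + (1 - p2 * z0) * log (1 - p1) (1 - p2 * z0)) / (p2 * z0)))"
proof -
  define q where "q = 1 - p1"
  have q: "0 < q" "q < 1" and p1: "0 \<le> p1" "p1 < 1" and p2: "0 < p2" "p2 \<le> 1" and c: "0 < c"
    using assms unfolding q_def by auto
  obtain z0 where z0: "z0 \<in> {0<..<1}"
    and min: "\<forall>z\<in>{0<..<1}. objective q p2 c z0 \<le> objective q p2 c z"
    using objective_attains_min[OF q p2 c] by blast
  define s where "s = log q (1 - z0)"
  define u where "u = log q (1 - p2 * z0)"
  have "0 < p2 * z0" "p2 * z0 < 1"
    using z0 p2 mult_less_one_of_le_one[of p2 z0] by auto
  then have "0 < s" "0 < u"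
    using q z0 log_gt_of_base_lt_one[of q _ 0] unfolding s_def u_def by auto
  moreover have periodic_value: "expected_time p1 p2 c (periodic_seq s u) = ennreal (objective q p2 c z0)"
    using expected_time_periodic_seq[OF assms(1,2) p2 c] z0 unfolding s_def u_def q_def by auto
  moreover have "expected_time p1 p2 c (periodic_seq s u) \<le> expected_time p1 p2 c \<pi>"
    if "semi_fractional \<pi>" for \<pi>
  proof -
    have t: "\<And>i. 0 \<le> \<pi> i"
      using that by (simp add: semi_fractional_def)
    show ?thesis
      unfolding periodic_value expected_time_eq_suminf[OF p1 less_imp_le[OF p2(1)] p2(2) c t] q_def[symmetric]
      using expected_cost_lower_bound[OF q p2 c t min] .
  qed
  ultimately show ?thesis
    using z0 min unfolding objective_def q_def by blast
qed

end
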